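(* Assume (L). For $\nu>0$ define $\bar{\mathcal N}_\nu=\{x:f(x)\le f(x^\star)+\nu\lambda_{\min}^3/L^2\}$. Then for every $\nu\in(0,1]$, $$\bar{\mathcal N}_{\nu^2/3}\subseteq\mathcal N_\nu\subseteq\bar{\mathcal N}_{\nu^2}.$$
   Context: $f:\mathbb{R}^d\to\mathbb{R}$ is twice continuously differentiable with Hessian $H(x)=\nabla^2 f(x)$ satisfying $\lambda_{\min} I\preceq H(x)\preceq \lambda_{\max} I$ for all $x$, where $0<\lambda_{\min}\le\lambda_{\max}$; $x^\star$ is the unique minimizer of $f$ and $H^\star=H(x^\star)$; $\|v\|_A=\sqrt{v^\top Av}$. Lipschitz Hessian assumption (L): $\|H(x)-H(y)\|\le L\|x-y\|$ for all $x,y$ (spectral/Euclidean norms). Neighborhood: $\mathcal N_\nu=\{x:\|x-x^\star\|_{H^\star}\le \nu\lambda_{\min}^{3/2}/L\}$. *)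

theory Defs
  imports "HOL-Analysis.Analysis"
begin

definition anorm :: "real^'n^'n \<Rightarrow> real^'n \<Rightarrow> real" where
  "anorm A v = sqrt (v \<bullet> (A *v v))"

definition nbhd :: "real^'n^'n \<Rightarrow> real^'n \<Rightarrow> real \<Rightarrow> real \<Rightarrow> real \<Rightarrow> (real^'n) set" where
  "nbhd Hs xs lmin L nu = {x. anorm Hs (x - xs) \<le> nu * lmin powr (3/2) / L}"

definition nbhd_bar :: "(real^'n \<Rightarrow> real) \<Rightarrow> real^'n \<Rightarrow> real \<Rightarrow> real \<Rightarrow> real \<Rightarrow> (real^'n) set" where
  "nbhd_bar f xs lmin L nu = {x. f x \<le> f xs + nu * lmin ^ 3 / L ^ 2}"

end

theory Submission
  imports Defs
begin

text \<open>Along a ray \<open>t \<mapsto> x\<^sup>\<star> + t d\<close> the function \<open>\<phi> t = f (x\<^sup>\<star> + t d)\<close> has \<open>\<phi>' 0 = 0\<close> and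
  \<open>\<phi>'' t = d\<^sup>T H(x\<^sup>\<star> + t d) d\<close>, which by (L) differs from \<open>r\<^sup>2 = \<parallel>d\<parallel>\<^sup>2\<close> (energy norm of \<open>H\<^sup>\<star>\<close>) by
  at most \<open>L t \<parallel>d\<parallel>\<^sup>3 \<le> t r\<^sup>3 / c\<close>, where \<open>c = \<lambda>\<^sub>m\<^sub>i\<^sub>n\<^sup>3\<^sup>/\<^sup>2 / L\<close> is the natural length scale:
  \<open>\<N>\<^sub>\<nu>\<close> is \<open>r \<le> \<nu> c\<close> and the sublevel neighbourhood is \<open>f - f(x\<^sup>\<star>) \<le> \<nu> c\<^sup>2\<close>. Integrating twice gives
  \<open>\<bar>f(x\<^sup>\<star> + d) - f(x\<^sup>\<star>) - r\<^sup>2/2\<bar> \<le> r\<^sup>3/(6c)\<close>, and the upper bound yields the second inclusion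
  at once. For the first, a point with \<open>r > \<nu> c\<close> has a point on its segment to \<open>x\<^sup>\<star>\<close> with
  \<open>r = \<sigma> c\<close>, \<open>\<nu> < \<sigma> \<le> 2\<close>; as \<open>\<phi>\<close> is convex with a critical point at 0 it is nondecreasing,
  so \<open>f(x) - f(x\<^sup>\<star>) \<ge> c\<^sup>2 (\<sigma>\<^sup>2/2 - \<sigma>\<^sup>3/6) > c\<^sup>2 \<nu>\<^sup>2/3\<close>.\<close>

lemma increment_le_of_second_deriv_le:
  fixes \<phi> \<phi>' \<phi>'' :: "real \<Rightarrow> real"
  assumes d1: "\<And>t. (\<phi> has_real_derivative \<phi>' t) (at t)"
    and d2: "\<And>t. (\<phi>' has_real_derivative \<phi>'' t) (at t)"
    and crit: "\<phi>' 0 = 0"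
    and le: "\<And>t. 0 \<le> t \<Longrightarrow> t \<le> 1 \<Longrightarrow> \<phi>'' t \<le> a + c * t"
  shows "\<phi> 1 - \<phi> 0 \<le> a / 2 + c / 6"
proof -
  \<comment> \<open>compare \<open>\<phi>\<close> with the cubic \<open>a t\<^sup>2/2 + c t\<^sup>3/6\<close>, whose second derivative is \<open>a + c t\<close>\<close>
  define w where "w t = \<phi>' t - a * t - c * t\<^sup>2 / 2" for t
  have dw: "((\<lambda>t. - w t) has_real_derivative a + c * t - \<phi>'' t) (at t)" for t
    unfolding w_def by (auto intro!: derivative_eq_intros d2)
  have w_nonpos: "w t \<le> 0" if "0 \<le> t" "t \<le> 1" for t
    using DERIV_nonneg_imp_nondecreasing[of 0 t "\<lambda>t. - w t"] dw le that crit
    by (fastforce simp: w_def)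
  define u where "u t = \<phi> t - a * t\<^sup>2 / 2 - c * t ^ 3 / 6" for t
  have du: "((\<lambda>t. - u t) has_real_derivative - w t) (at t)" for t
    unfolding u_def w_def
    by (auto intro!: derivative_eq_intros d1 simp: power2_eq_square power3_eq_cube)
  have "- u 0 \<le> - u 1"
    using DERIV_nonneg_imp_nondecreasing[of 0 1 "\<lambda>t. - u t"] du w_nonpos by fastforce
  then show ?thesis by (simp add: u_def)
qed

lemma increment_bound_of_second_deriv_bound:
  fixes \<phi> \<phi>' \<phi>'' :: "real \<Rightarrow> real"
  assumes d1: "\<And>t. (\<phi> has_real_derivative \<phi>' t) (at t)"
    and d2: "\<And>t. (\<phi>' has_real_derivative \<phi>'' t) (at t)"
    and crit: "\<phi>' 0 = 0"
    and bound: "\<And>t. 0 \<le> t \<Longrightarrow> t \<le> 1 \<Longrightarrow> \<bar>\<phi>'' t - a\<bar> \<le> c * t"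
  shows "\<bar>\<phi> 1 - \<phi> 0 - a / 2\<bar> \<le> c / 6"
proof -
  have "\<phi> 1 - \<phi> 0 \<le> a / 2 + c / 6"
    by (rule increment_le_of_second_deriv_le[OF d1 d2 crit]) (use bound in \<open>force simp: abs_le_iff\<close>)
  moreover have "- \<phi> 1 - - \<phi> 0 \<le> - a / 2 + c / 6"
  proof (rule increment_le_of_second_deriv_le[of "\<lambda>t. - \<phi> t" "\<lambda>t. - \<phi>' t" "\<lambda>t. - \<phi>'' t"])
    show "- \<phi>'' t \<le> - a + c * t" if "0 \<le> t" "t \<le> 1" for t
      using bound[OF that] by (simp add: abs_le_iff)
  qed (use d1 d2 crit in \<open>auto intro: DERIV_minus\<close>)
  ultimately show ?thesis by linarith
qed

lemma nondecreasing_of_convex_critical: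
  fixes \<phi> \<phi>' \<phi>'' :: "real \<Rightarrow> real"
  assumes d1: "\<And>t. (\<phi> has_real_derivative \<phi>' t) (at t)"
    and d2: "\<And>t. (\<phi>' has_real_derivative \<phi>'' t) (at t)"
    and crit: "\<phi>' 0 = 0"
    and convex: "\<And>t. 0 \<le> \<phi>'' t"
    and "0 \<le> s" "s \<le> t"
  shows "\<phi> s \<le> \<phi> t"
proof -
  have "0 \<le> \<phi>' u" if "0 \<le> u" for u
    using DERIV_nonneg_imp_nondecreasing[of 0 u \<phi>'] d2 convex crit that by fastforce
  then show ?thesis
    using DERIV_nonneg_imp_nondecreasing[of s t \<phi>] d1 assms(5,6) by fastforce
qed

lemma has_real_derivative_along_line:
  fixes f :: "real^'n \<Rightarrow> real" and g :: "real^'n \<Rightarrow> real^'n" and H :: "real^'n \<Rightarrow> real^'n^'n"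
  assumes grad: "\<And>x. (f has_derivative (\<lambda>h. g x \<bullet> h)) (at x)"
    and hess: "\<And>x. (g has_derivative (\<lambda>h. H x *v h)) (at x)"
  shows "((\<lambda>t. f (x + t *\<^sub>R d)) has_real_derivative g (x + t *\<^sub>R d) \<bullet> d) (at t)"
    and "((\<lambda>t. g (x + t *\<^sub>R d) \<bullet> d) has_real_derivative d \<bullet> (H (x + t *\<^sub>R d) *v d)) (at t)"
proof -
  have line: "((\<lambda>t. x + t *\<^sub>R d) has_derivative (\<lambda>h. h *\<^sub>R d)) (at t)"
    by (auto intro!: derivative_eq_intros)
  show "((\<lambda>t. f (x + t *\<^sub>R d)) has_real_derivative g (x + t *\<^sub>R d) \<bullet> d) (at t)"
    unfolding has_field_derivative_def
    by (rule has_derivative_eq_rhs[OF has_derivative_compose[OF line grad]])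
      (simp add: fun_eq_iff mult.commute)
  have "((\<lambda>t. g (x + t *\<^sub>R d)) has_derivative (\<lambda>h. H (x + t *\<^sub>R d) *v (h *\<^sub>R d))) (at t)"
    using has_derivative_compose[OF line hess] by (simp add: o_def)
  then have "((\<lambda>t. g (x + t *\<^sub>R d) \<bullet> d) has_derivative
      (\<lambda>h. (H (x + t *\<^sub>R d) *v (h *\<^sub>R d)) \<bullet> d)) (at t)"
    by (auto intro!: derivative_eq_intros)
  then show "((\<lambda>t. g (x + t *\<^sub>R d) \<bullet> d) has_real_derivative d \<bullet> (H (x + t *\<^sub>R d) *v d)) (at t)"
    unfolding has_field_derivative_def
    by (rule has_derivative_eq_rhs) (simp add: fun_eq_iff matrix_vector_mult_scaleR inner_commute)
qed

lemma quadratic_form_diff_le_onorm: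
  fixes A B :: "real^'n^'n"
  shows "\<bar>d \<bullet> (A *v d) - d \<bullet> (B *v d)\<bar> \<le> onorm (\<lambda>v. (A - B) *v v) * (norm d)\<^sup>2"
proof -
  have "\<bar>d \<bullet> (A *v d) - d \<bullet> (B *v d)\<bar> = \<bar>d \<bullet> ((A - B) *v d)\<bar>"
    by (simp add: matrix_vector_mult_diff_rdistrib inner_diff_right)
  also have "\<dots> \<le> norm d * norm ((A - B) *v d)"
    by (rule Cauchy_Schwarz_ineq2)
  also have "\<dots> \<le> norm d * (onorm (\<lambda>v. (A - B) *v v) * norm d)"
    using onorm[of "\<lambda>v. (A - B) *v v" d] by (simp add: linear_conv_bounded_linear mult_left_mono)
  finally show ?thesis by (simp add: power2_eq_square mult_ac)
qed

lemma cubic_gap_gt: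
  fixes \<nu> \<sigma> :: real
  assumes "0 < \<nu>" "\<nu> \<le> 1" "\<nu> < \<sigma>" "\<sigma> \<le> 2"
  shows "\<nu>\<^sup>2 / 3 < \<sigma>\<^sup>2 / 2 - \<sigma> ^ 3 / 6"
proof -
  have "\<nu> ^ 3 \<le> \<nu>\<^sup>2"
    using assms by (simp add: power_decreasing)
  have diff: "\<sigma>\<^sup>2/2 - \<sigma>^3/6 - (\<nu>\<^sup>2/2 - \<nu>^3/6) = (\<sigma> - \<nu>) * (3 * (\<sigma> + \<nu>) - (\<sigma>\<^sup>2 + \<sigma> * \<nu> + \<nu>\<^sup>2)) / 6"
    by (simp add: algebra_simps power2_eq_square power3_eq_cube)
  have "\<sigma>\<^sup>2 \<le> 2 * \<sigma>" "\<sigma> * \<nu> \<le> \<sigma>" "\<nu>\<^sup>2 \<le> \<nu>"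
    using assms by (simp_all add: power2_eq_square mult_left_le)
  then have "\<sigma>\<^sup>2 + \<sigma> * \<nu> + \<nu>\<^sup>2 < 3 * \<sigma> + 3 * \<nu>"
    using assms by linarith
  then have "0 < (\<sigma> - \<nu>) * (3 * (\<sigma> + \<nu>) - (\<sigma>\<^sup>2 + \<sigma> * \<nu> + \<nu>\<^sup>2)) / 6"
    using assms by simp
  then show ?thesis
    using diff \<open>\<nu> ^ 3 \<le> \<nu>\<^sup>2\<close> by linarith
qed

locale min_lipschitz_hessian =
  fixes f :: "real^'n \<Rightarrow> real" and g :: "real^'n \<Rightarrow> real^'n" and H :: "real^'n \<Rightarrow> real^'n^'n"
    and xs :: "real^'n" and lmin L :: real
  assumes grad: "\<And>x. (f has_derivative (\<lambda>h. g x \<bullet> h)) (at x)"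
    and hess: "\<And>x. (g has_derivative (\<lambda>h. H x *v h)) (at x)"
    and lmin_pos: "0 < lmin"
    and lower: "\<And>x v. lmin * (v \<bullet> v) \<le> v \<bullet> (H x *v v)"
    and xs_min: "\<And>x. f xs \<le> f x"
    and L_pos: "0 < L"
    and lipschitz: "\<And>x y. onorm (\<lambda>v. (H x - H y) *v v) \<le> L * norm (x - y)"
begin

definition scale :: real where
  "scale = sqrt lmin ^ 3 / L"

lemma scale_pos: "0 < scale"
  using lmin_pos L_pos by (simp add: scale_def)

lemma nbhd_eq: "nbhd (H xs) xs lmin L \<nu> = {x. anorm (H xs) (x - xs) \<le> \<nu> * scale}"
proof -
  have "lmin powr (3/2) = (lmin powr (1/2)) powr 3"
    by (simp add: powr_powr)
  also have "\<dots> = sqrt lmin ^ 3"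
    using lmin_pos by (simp add: powr_half_sqrt powr_realpow[of _ 3, simplified])
  finally show ?thesis by (simp add: nbhd_def scale_def)
qed

lemma nbhd_bar_eq: "nbhd_bar f xs lmin L \<nu> = {x. f x - f xs \<le> \<nu> * scale\<^sup>2}"
proof -
  have "sqrt lmin ^ 3 * sqrt lmin ^ 3 = lmin ^ 3"
    using lmin_pos by (simp flip: power_mult_distrib)
  then have "scale\<^sup>2 = lmin ^ 3 / L\<^sup>2"
    by (simp add: scale_def power2_eq_square)
  then show ?thesis by (auto simp: nbhd_bar_def)
qed

lemma hessian_psd: "0 \<le> v \<bullet> (H x *v v)"
  using lower[of v x] lmin_pos by (smt (verit) inner_ge_zero mult_nonneg_nonneg)

lemma anorm_sq: "(anorm (H xs) d)\<^sup>2 = d \<bullet> (H xs *v d)" and anorm_nonneg: "0 \<le> anorm (H xs) d"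
  using hessian_psd[of d xs] by (simp_all add: anorm_def)

lemma anorm_scaleR: "0 \<le> t \<Longrightarrow> anorm (H xs) (t *\<^sub>R d) = t * anorm (H xs) d"
  by (simp add: anorm_def matrix_vector_mult_scaleR real_sqrt_mult power2_eq_square[symmetric])

lemma norm_le_anorm: "sqrt lmin * norm d \<le> anorm (H xs) d"
proof (rule power2_le_imp_le[OF _ anorm_nonneg])
  show "(sqrt lmin * norm d)\<^sup>2 \<le> (anorm (H xs) d)\<^sup>2"
    using lower[of d xs] lmin_pos by (simp add: anorm_sq power_mult_distrib power2_norm_eq_inner)
qed

lemma gradient_zero: "g xs \<bullet> d = 0"
proof -
  have "g (xs + 0 *\<^sub>R d) \<bullet> d = 0"
    by (rule DERIV_local_min[OF has_real_derivative_along_line(1)[OF grad hess], of 1])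
      (simp_all add: xs_min)
  then show ?thesis by simp
qed

lemma f_mono_along_ray:
  assumes "0 \<le> t" "t \<le> 1"
  shows "f (xs + t *\<^sub>R d) \<le> f (xs + d)"
  using nondecreasing_of_convex_critical[OF has_real_derivative_along_line[OF grad hess],
      of xs d t 1] gradient_zero hessian_psd assms by simp

lemma gap_bound:
  assumes r: "r = anorm (H xs) d"
  shows "\<bar>f (xs + d) - f xs - r\<^sup>2 / 2\<bar> \<le> r ^ 3 / (6 * scale)"
proof -
  note line = has_real_derivative_along_line[OF grad hess, of xs d]
  have lip: "\<bar>d \<bullet> (H (xs + t *\<^sub>R d) *v d) - r\<^sup>2\<bar> \<le> L * norm d ^ 3 * t" if "0 \<le> t" for t
  proof -
    have "\<bar>d \<bullet> (H (xs + t *\<^sub>R d) *v d) - r\<^sup>2\<bar> \<le> onorm (\<lambda>v. (H (xs + t *\<^sub>R d) - H xs) *v v) * (norm d)\<^sup>2"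
      using quadratic_form_diff_le_onorm by (simp add: r anorm_sq)
    also have "\<dots> \<le> L * norm (t *\<^sub>R d) * (norm d)\<^sup>2"
      using lipschitz[of "xs + t *\<^sub>R d" xs] by (simp add: mult_right_mono)
    finally show ?thesis
      using that by (simp add: power2_eq_square power3_eq_cube mult_ac)
  qed
  have "\<bar>f (xs + d) - f xs - r\<^sup>2 / 2\<bar> \<le> L * norm d ^ 3 / 6"
    using increment_bound_of_second_deriv_bound[OF line, of "r\<^sup>2" "L * norm d ^ 3"] gradient_zero lip
    by simp
  also have "L * norm d ^ 3 \<le> r ^ 3 / scale"
  proof -
    have "(sqrt lmin * norm d) ^ 3 \<le> r ^ 3"
      using norm_le_anorm[of d] r lmin_pos by (simp add: power_mono)
    then show ?thesis
      using L_pos lmin_pos by (simp add: scale_def field_simps power_mult_distrib)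
  qed
  finally show ?thesis by simp
qed

lemma nbhd_subset_nbhd_bar:
  assumes "\<nu> \<le> 1"
  shows "nbhd (H xs) xs lmin L \<nu> \<subseteq> nbhd_bar f xs lmin L (\<nu>\<^sup>2)"
proof
  fix x assume "x \<in> nbhd (H xs) xs lmin L \<nu>"
  define s where "s = anorm (H xs) (x - xs) / scale"
  have s: "0 \<le> s" "s \<le> \<nu>"
    using \<open>x \<in> _\<close> anorm_nonneg scale_pos by (auto simp: s_def nbhd_eq field_simps)
  have "f x - f xs \<le> (s * scale)\<^sup>2 / 2 + (s * scale) ^ 3 / (6 * scale)"
    using gap_bound[of "s * scale" "x - xs"] scale_pos by (simp add: s_def)
  also have "\<dots> = scale\<^sup>2 * (s\<^sup>2 / 2 + s ^ 3 / 6)"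
    using scale_pos by (simp add: field_simps power2_eq_square power3_eq_cube)
  also have "\<dots> \<le> scale\<^sup>2 * \<nu>\<^sup>2"
  proof -
    have "s\<^sup>2 \<le> \<nu>\<^sup>2" "s ^ 3 \<le> s\<^sup>2"
      using s assms by (simp_all add: power_mono power_decreasing)
    then have "s\<^sup>2 / 2 + s ^ 3 / 6 \<le> \<nu>\<^sup>2"
      using zero_le_power2[of \<nu>] by linarith
    then show ?thesis by (simp add: mult_left_mono)
  qed
  finally show "x \<in> nbhd_bar f xs lmin L (\<nu>\<^sup>2)"
    by (simp add: nbhd_bar_eq mult.commute)
qed

lemma nbhd_bar_subset_nbhd:
  assumes "0 < \<nu>" "\<nu> \<le> 1"
  shows "nbhd_bar f xs lmin L (\<nu>\<^sup>2 / 3) \<subseteq> nbhd (H xs) xs lmin L \<nu>"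
proof
  fix x assume x: "x \<in> nbhd_bar f xs lmin L (\<nu>\<^sup>2 / 3)"
  show "x \<in> nbhd (H xs) xs lmin L \<nu>"
  proof (rule ccontr)
    define d where "d = x - xs"
    define r where "r = anorm (H xs) d"
    assume "x \<notin> nbhd (H xs) xs lmin L \<nu>"
    then have far: "\<nu> * scale < r"
      by (simp add: nbhd_eq r_def d_def)
    define \<sigma> where "\<sigma> = min (r / scale) 2"
    define t where "t = \<sigma> * scale / r"
    have \<sigma>: "\<nu> < \<sigma>" "\<sigma> \<le> 2"
      using far scale_pos assms by (auto simp: \<sigma>_def field_simps)
    have r_pos: "0 < r"
      using far assms scale_pos by (smt (verit) mult_pos_pos)
    have "\<sigma> * scale \<le> r"
      using scale_pos by (simp add: \<sigma>_def pos_le_divide_eq[symmetric])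
    then have t: "0 \<le> t" "t \<le> 1"
      using r_pos scale_pos \<sigma> assms by (simp_all add: t_def)
    have "anorm (H xs) (t *\<^sub>R d) = \<sigma> * scale"
      using r_pos t(1) by (simp add: anorm_scaleR r_def[symmetric] t_def)
    then have "(\<sigma> * scale)\<^sup>2 / 2 - (\<sigma> * scale) ^ 3 / (6 * scale) \<le> f (xs + t *\<^sub>R d) - f xs"
      using gap_bound[of "\<sigma> * scale" "t *\<^sub>R d"] by (simp add: abs_le_iff)
    also have "\<dots> \<le> f x - f xs"
      using f_mono_along_ray[OF t, of d] by (simp add: d_def)
    also have "\<dots> \<le> \<nu>\<^sup>2 / 3 * scale\<^sup>2"
      using x by (simp add: nbhd_bar_eq)
    finally have "scale\<^sup>2 * (\<sigma>\<^sup>2 / 2 - \<sigma> ^ 3 / 6) \<le> scale\<^sup>2 * (\<nu>\<^sup>2 / 3)"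
      using scale_pos by (simp add: field_simps power2_eq_square power3_eq_cube)
    then show False
      using cubic_gap_gt[OF assms \<sigma>] scale_pos by simp
  qed
qed

end

theorem lemmaB2:
  fixes f :: "real^'n \<Rightarrow> real"
    and g :: "real^'n \<Rightarrow> real^'n"
    and H :: "real^'n \<Rightarrow> real^'n^'n"
    and xs :: "real^'n"
    and lmin lmax L nu :: real
  assumes grad: "\<And>x. (f has_derivative (\<lambda>h. g x \<bullet> h)) (at x)"
    and hess: "\<And>x. (g has_derivative (\<lambda>h. H x *v h)) (at x)"
    and hess_cont: "continuous_on UNIV H"
    and lmin_pos: "0 < lmin" and lmin_le: "lmin \<le> lmax"
    and lower: "\<And>x v. lmin * (v \<bullet> v) \<le> v \<bullet> (H x *v v)"
    and upper: "\<And>x v. v \<bullet> (H x *v v) \<le> lmax * (v \<bullet> v)"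
    and xs_min: "\<And>x. f xs \<le> f x"
    and xs_unique: "\<And>y. (\<forall>x. f y \<le> f x) \<Longrightarrow> y = xs"
    and L_pos: "0 < L"
    and lipschitz: "\<And>x y. onorm (\<lambda>v. (H x - H y) *v v) \<le> L * norm (x - y)"
    and nu: "0 < nu" "nu \<le> 1"
  shows "nbhd_bar f xs lmin L (nu\<^sup>2 / 3) \<subseteq> nbhd (H xs) xs lmin L nu
       \<and> nbhd (H xs) xs lmin L nu \<subseteq> nbhd_bar f xs lmin L (nu\<^sup>2)"
proof -
  interpret min_lipschitz_hessian f g H xs lmin L
    using grad hess lmin_pos lower xs_min L_pos lipschitz by unfold_locales
  show ?thesis
    using nbhd_bar_subset_nbhd[OF nu] nbhd_subset_nbhd_bar[OF nu(2)] by blast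
qed

end
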